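(* Let $A\in\mathbb{R}^{m\times n}_{\geq 0}$ have every column nonzero, let $\mu>0$, and define $f_\mu(x)=\vec{1}^Tx+\mu\sum_{j=1}^m\exp\!\big(\tfrac{1}{\mu}(1-(Ax)_j)\big)$ and $L=4/\mu$. Let $\Delta=\{x\in\mathbb{R}^n: 0\leq x_i\leq 3/\|A_{:i}\|_\infty \ \forall i\}$. Then for any $x\in\Delta$ and $i\in[n]$: (1) if $\nabla_i f_\mu(x)\in(-1,1)$, then for all $\gamma$ with $|\gamma|\leq \frac{1}{L\|A_{:i}\|_\infty}$, $$|\nabla_i f_\mu(x)-\nabla_i f_\mu(x+\gamma e_i)|\leq L\|A_{:i}\|_\infty|\gamma|;$$ (2) if $\nabla_i f_\mu(x)\leq -1$, then for all $\gamma\leq\frac{1}{L\|A_{:i}\|_\infty}$, $$\nabla_i f_\mu(x+\gamma e_i)\leq \Big(1-\frac{L\|A_{:i}\|_\infty}{2}|\gamma|\Big)\nabla_i f_\mu(x).$$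
   Context: $A_{:i}$ denotes the $i$-th column of $A$, $\|A_{:i}\|_\infty$ its largest entry, $e_i$ the $i$-th standard basis vector, $\vec 1$ the all-ones vector, and $\nabla_i f_\mu$ the $i$-th partial derivative of $f_\mu$; explicitly $\nabla_i f_\mu(x)=1-\sum_j A_{ji}\exp(\frac1\mu(1-(Ax)_j))$. *)

theory Defs
  imports "HOL-Analysis.Analysis"
begin

text \<open>A :: real^'n^'m is an m x n matrix (rows indexed by 'm, columns by 'n).\<close>

definition col_inf_norm :: "real^'n^'m \<Rightarrow> 'n \<Rightarrow> real" where
  "col_inf_norm A i = Max {\<bar>A $ j $ i\<bar> | j. True}"

definition f_mu :: "real^'n^'m \<Rightarrow> real \<Rightarrow> real^'n \<Rightarrow> real" where
  "f_mu A \<mu> x = (\<Sum>i\<in>UNIV. x $ i) + \<mu> * (\<Sum>j\<in>UNIV. exp ((1 - (A *v x) $ j) / \<mu>))"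

definition grad_f_mu :: "real^'n^'m \<Rightarrow> real \<Rightarrow> real^'n \<Rightarrow> 'n \<Rightarrow> real" where
  "grad_f_mu A \<mu> x i = 1 - (\<Sum>j\<in>UNIV. A $ j $ i * exp ((1 - (A *v x) $ j) / \<mu>))"

definition unit_vec :: "'n \<Rightarrow> real^'n" where
  "unit_vec i = (\<chi> k. if k = i then 1 else 0)"

end

theory Submission
  imports Defs
begin

text \<open>Write \<open>\<nabla>\<^sub>i f\<^sub>\<mu>(x) = 1 - S\<close> with \<open>S = \<Sum>\<^sub>j a\<^sub>j\<close>, \<open>a\<^sub>j = A\<^sub>j\<^sub>i exp((1 - (Ax)\<^sub>j)/\<mu>) \<ge> 0\<close>.
  Moving along \<open>e\<^sub>i\<close> by \<open>\<gamma>\<close> multiplies each \<open>a\<^sub>j\<close> by \<open>exp(-\<gamma> A\<^sub>j\<^sub>i/\<mu>)\<close>, whose exponent has modulus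
  at most \<open>\<tau> = |\<gamma>| \<parallel>A\<^sub>:\<^sub>i\<parallel>\<^sub>\<infinity>/\<mu>\<close>. In case (1) we have \<open>S < 2\<close>, and \<open>|e\<^sup>s - 1| \<le> 2|s|\<close> for
  \<open>|s| \<le> 1/2\<close> bounds the change by \<open>2\<tau>S \<le> 4\<tau>\<close>. In case (2) we have \<open>S \<ge> 2\<close>, and \<open>e\<^sup>s \<ge> 1 + s\<close> gives, for the new sum
  \<open>S'\<close>, \<open>1 - S' \<le> 1 - (1 - \<tau>)S \<le> (1 - 2\<tau>)(1 - S)\<close> for \<open>\<gamma> \<ge> 0\<close>, while for \<open>\<gamma> < 0\<close> the weights only grow;
  so (2) holds for every \<open>\<gamma>\<close>.\<close>

lemma abs_exp_minus_one_le:
  fixes s :: real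
  assumes "\<bar>s\<bar> \<le> 1/2"
  shows "\<bar>exp s - 1\<bar> \<le> 2 * \<bar>s\<bar>"
proof (cases "s \<ge> 0")
  case True
  then show ?thesis using real_exp_bound_lemma[of s] assms by auto
next
  case False
  then have "\<bar>exp s - 1\<bar> = 1 - exp s" by simp
  then show ?thesis using False exp_ge_add_one_self[of s] by linarith
qed

lemma abs_sum_weighted_exp_minus_one_le:
  fixes a s :: "'j \<Rightarrow> real"
  assumes "\<And>j. j \<in> J \<Longrightarrow> 0 \<le> a j" and "\<And>j. j \<in> J \<Longrightarrow> \<bar>s j\<bar> \<le> t" and "t \<le> 1/2"
  shows "\<bar>\<Sum>j\<in>J. a j * (exp (s j) - 1)\<bar> \<le> 2 * t * (\<Sum>j\<in>J. a j)"
proof -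
  have "\<bar>\<Sum>j\<in>J. a j * (exp (s j) - 1)\<bar> \<le> (\<Sum>j\<in>J. a j * \<bar>exp (s j) - 1\<bar>)"
    using sum_abs[of "\<lambda>j. a j * (exp (s j) - 1)" J] assms(1) by (simp add: abs_mult)
  also have "\<dots> \<le> (\<Sum>j\<in>J. a j * (2 * t))"
  proof (rule sum_mono)
    fix j assume "j \<in> J"
    then have "\<bar>exp (s j) - 1\<bar> \<le> 2 * t"
      using abs_exp_minus_one_le[of "s j"] assms(2,3) by fastforce
    then show "a j * \<bar>exp (s j) - 1\<bar> \<le> a j * (2 * t)"
      using \<open>j \<in> J\<close> assms(1) by (simp add: mult_left_mono)
  qed
  finally show ?thesis by (simp add: sum_distrib_right mult.commute)
qed

lemma sum_weighted_exp_ge: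
  fixes a s :: "'j \<Rightarrow> real"
  assumes "\<And>j. j \<in> J \<Longrightarrow> 0 \<le> a j" and "\<And>j. j \<in> J \<Longrightarrow> - t \<le> s j"
  shows "(1 - t) * (\<Sum>j\<in>J. a j) \<le> (\<Sum>j\<in>J. a j * exp (s j))"
proof -
  have "(1 - t) * (\<Sum>j\<in>J. a j) = (\<Sum>j\<in>J. a j * (1 - t))"
    by (simp add: sum_distrib_left mult.commute)
  also have "\<dots> \<le> (\<Sum>j\<in>J. a j * exp (s j))"
  proof (rule sum_mono)
    fix j assume "j \<in> J"
    have "1 - t \<le> exp (s j)"
      using exp_ge_add_one_self[of "s j"] assms(2)[OF \<open>j \<in> J\<close>] by linarith
    then show "a j * (1 - t) \<le> a j * exp (s j)"
      using assms(1)[OF \<open>j \<in> J\<close>] by (rule mult_left_mono)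
  qed
  finally show ?thesis .
qed

lemma matrix_vector_mult_add_scaleR_unit_vec:
  fixes A :: "real^'n^'m"
  shows "(A *v (x + \<gamma> *\<^sub>R unit_vec i)) $ j = (A *v x) $ j + \<gamma> * A $ j $ i"
proof -
  have "(A *v (\<gamma> *\<^sub>R unit_vec i)) $ j = \<gamma> * A $ j $ i"
    by (simp add: matrix_vector_mult_def unit_vec_def if_distrib cong: if_cong)
  then show ?thesis by (simp add: matrix_vector_right_distrib)
qed

lemma grad_f_mu_add_scaleR_unit_vec:
  "grad_f_mu A \<mu> (x + \<gamma> *\<^sub>R unit_vec i) i
     = 1 - (\<Sum>j\<in>UNIV. A $ j $ i * exp ((1 - (A *v x) $ j) / \<mu>) * exp (- (\<gamma> * A $ j $ i / \<mu>)))"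
proof -
  have "exp ((1 - (A *v (x + \<gamma> *\<^sub>R unit_vec i)) $ j) / \<mu>)
          = exp ((1 - (A *v x) $ j) / \<mu>) * exp (- (\<gamma> * A $ j $ i / \<mu>))" for j
    by (simp add: matrix_vector_mult_add_scaleR_unit_vec diff_divide_distrib add_divide_distrib flip: exp_add)
  then show ?thesis by (simp add: grad_f_mu_def mult.assoc)
qed

lemma col_inf_norm_ge: "\<bar>A $ j $ i\<bar> \<le> col_inf_norm A i"
  unfolding col_inf_norm_def setcompr_eq_image by (rule Max_ge) auto

lemma col_inf_norm_pos:
  assumes "A $ j $ i \<noteq> 0"
  shows "0 < col_inf_norm A i"
  using col_inf_norm_ge[of A j i] assms by linarith

lemma grad_f_mu_lipschitz_along_coordinate:
  fixes A :: "real^'n^'m"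
  assumes nonneg: "\<And>j. 0 \<le> A $ j $ i" and bound: "\<And>j. A $ j $ i \<le> c" and "\<mu> > 0"
    and grad_ge: "grad_f_mu A \<mu> x i \<ge> -1" and small: "\<bar>\<gamma>\<bar> * c / \<mu> \<le> 1/2"
  shows "\<bar>grad_f_mu A \<mu> x i - grad_f_mu A \<mu> (x + \<gamma> *\<^sub>R unit_vec i) i\<bar> \<le> 4 * c / \<mu> * \<bar>\<gamma>\<bar>"
proof -
  define a where "a j = A $ j $ i * exp ((1 - (A *v x) $ j) / \<mu>)" for j
  define s where "s j = - (\<gamma> * A $ j $ i / \<mu>)" for j
  have "0 \<le> c" using order_trans[OF nonneg bound] .
  have a_nonneg: "0 \<le> a j" for j using nonneg[of j] by (simp add: a_def)
  have grad_x: "grad_f_mu A \<mu> x i = 1 - sum a UNIV" by (simp add: grad_f_mu_def a_def)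
  have s_bound: "\<bar>s j\<bar> \<le> \<bar>\<gamma>\<bar> * c / \<mu>" for j
    using nonneg[of j] bound[of j] \<open>\<mu> > 0\<close>
    by (simp add: s_def abs_mult divide_right_mono mult_left_mono)
  have "grad_f_mu A \<mu> x i - grad_f_mu A \<mu> (x + \<gamma> *\<^sub>R unit_vec i) i
          = (\<Sum>j\<in>UNIV. a j * (exp (s j) - 1))"
    by (simp add: grad_x grad_f_mu_add_scaleR_unit_vec a_def s_def algebra_simps sum_subtractf)
  also have "\<bar>\<dots>\<bar> \<le> 2 * (\<bar>\<gamma>\<bar> * c / \<mu>) * sum a UNIV"
    using a_nonneg s_bound small by (rule abs_sum_weighted_exp_minus_one_le)
  also have "\<dots> \<le> 2 * (\<bar>\<gamma>\<bar> * c / \<mu>) * 2"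
    using grad_ge grad_x \<open>0 \<le> c\<close> \<open>\<mu> > 0\<close> by (intro mult_left_mono) auto
  finally show ?thesis by (simp add: field_simps)
qed

lemma grad_f_mu_contraction_along_coordinate:
  fixes A :: "real^'n^'m"
  assumes nonneg: "\<And>j. 0 \<le> A $ j $ i" and bound: "\<And>j. A $ j $ i \<le> c" and "\<mu> > 0"
    and grad_le: "grad_f_mu A \<mu> x i \<le> -1"
  shows "grad_f_mu A \<mu> (x + \<gamma> *\<^sub>R unit_vec i) i \<le> (1 - 2 * c / \<mu> * \<bar>\<gamma>\<bar>) * grad_f_mu A \<mu> x i"
proof -
  define a where "a j = A $ j $ i * exp ((1 - (A *v x) $ j) / \<mu>)" for j
  define s where "s j = - (\<gamma> * A $ j $ i / \<mu>)" for j
  define S where "S = sum a UNIV"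
  define t where "t = max \<gamma> 0 * c / \<mu>"
  define r where "r = 2 * c / \<mu> * \<bar>\<gamma>\<bar>"
  have "0 \<le> c" using order_trans[OF nonneg bound] .
  have a_nonneg: "0 \<le> a j" for j using nonneg[of j] by (simp add: a_def)
  have grad_x: "grad_f_mu A \<mu> x i = 1 - S" by (simp add: grad_f_mu_def a_def S_def)
  with grad_le have "S \<ge> 2" by simp
  have s_ge: "- t \<le> s j" for j
  proof (cases "\<gamma> \<ge> 0")
    case True
    then show ?thesis using bound[of j] \<open>\<mu> > 0\<close>
      by (simp add: s_def t_def divide_right_mono mult_left_mono)
  next
    case False
    then show ?thesis using nonneg[of j] \<open>\<mu> > 0\<close>
      by (simp add: s_def t_def mult_nonpos_nonneg divide_nonpos_pos)
  qed
  have "grad_f_mu A \<mu> (x + \<gamma> *\<^sub>R unit_vec i) i = 1 - (\<Sum>j\<in>UNIV. a j * exp (s j))"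
    by (simp add: grad_f_mu_add_scaleR_unit_vec a_def s_def)
  also have "\<dots> \<le> 1 - (1 - t) * S"
    using sum_weighted_exp_ge[of UNIV a t s] a_nonneg s_ge by (simp add: S_def)
  also have "\<dots> \<le> (1 - r) * (1 - S)"
  proof (cases "\<gamma> \<ge> 0")
    case True
    have "0 \<le> t" using True \<open>0 \<le> c\<close> \<open>\<mu> > 0\<close> by (simp add: t_def)
    then have "t * 2 \<le> t * S" using \<open>S \<ge> 2\<close> by (intro mult_left_mono)
    moreover have "r = 2 * t" using True by (simp add: r_def t_def)
    ultimately show ?thesis by (simp add: algebra_simps)
  next
    case False
    have "0 \<le> r" using \<open>0 \<le> c\<close> \<open>\<mu> > 0\<close> by (simp add: r_def)
    then have "0 \<le> r * (S - 1)" using \<open>S \<ge> 2\<close> by simp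
    moreover have "t = 0" using False by (simp add: t_def)
    ultimately show ?thesis by (simp add: algebra_simps)
  qed
  finally show ?thesis by (simp add: grad_x r_def)
qed

theorem lemma5:
  fixes A :: "real^'n^'m" and \<mu> L :: real and x :: "real^'n" and i :: 'n
  assumes nonneg: "\<forall>j k. A $ j $ k \<ge> 0"
    and cols_nonzero: "\<forall>k. \<exists>j. A $ j $ k \<noteq> 0"
    and mu_pos: "\<mu> > 0"
    and L_def: "L = 4 / \<mu>"
    and x_in: "\<forall>k. 0 \<le> x $ k \<and> x $ k \<le> 3 / col_inf_norm A k"
  shows "(grad_f_mu A \<mu> x i \<in> {-1<..<1} \<longrightarrow>
            (\<forall>\<gamma>. \<bar>\<gamma>\<bar> \<le> 1 / (L * col_inf_norm A i) \<longrightarrow>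
               \<bar>grad_f_mu A \<mu> x i - grad_f_mu A \<mu> (x + \<gamma> *\<^sub>R unit_vec i) i\<bar>
                 \<le> L * col_inf_norm A i * \<bar>\<gamma>\<bar>))
       \<and> (grad_f_mu A \<mu> x i \<le> -1 \<longrightarrow>
            (\<forall>\<gamma>. \<gamma> \<le> 1 / (L * col_inf_norm A i) \<longrightarrow>
               grad_f_mu A \<mu> (x + \<gamma> *\<^sub>R unit_vec i) i
                 \<le> (1 - L * col_inf_norm A i / 2 * \<bar>\<gamma>\<bar>) * grad_f_mu A \<mu> x i))"
proof -
  define c where "c = col_inf_norm A i"
  have col_nonneg: "\<And>j. 0 \<le> A $ j $ i" using nonneg by blast
  have col_le: "\<And>j. A $ j $ i \<le> c"
    unfolding c_def using col_inf_norm_ge abs_ge_self order_trans by blast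
  have "0 < c" unfolding c_def using cols_nonzero col_inf_norm_pos by blast
  have "\<bar>\<gamma>\<bar> * c / \<mu> \<le> 1/2" if "\<bar>\<gamma>\<bar> \<le> 1 / (L * c)" for \<gamma>
    using that \<open>0 < c\<close> mu_pos by (simp add: L_def field_simps)
  then show ?thesis
    using grad_f_mu_lipschitz_along_coordinate[OF col_nonneg col_le mu_pos]
      grad_f_mu_contraction_along_coordinate[OF col_nonneg col_le mu_pos]
    by (auto simp: L_def c_def[symmetric])
qed

end
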